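(* Let $(X_1,\dots,X_n)$ be component lifetimes with a copula $C$ and a common marginal distribution function $F$, and let $T=\psi(X_1,\dots,X_n)$ and $T^*=\psi^*(X_1,\dots,X_n)$ be the lifetimes of two semi-coherent systems built from these components. Then there exists $D\in\mathcal{D}_2$ (determined by $C$ and the minimal cut sets of $\psi$ and $\psi^*$) such that the joint distribution function of $(T,T^* )$ satisfies $\Pr(T\le x,T^*\le y)=D(F(x),F(y))$ for all $x,y$.
   Context: A system is a Boolean function $\psi:\{0,1\}^n\to\{0,1\}$; it is semi-coherent if $\psi$ is increasing, $\psi(0,\dots,0)=0$ and $\psi(1,\dots,1)=1$. A set $A\subseteq\{1,\dots,n\}$ is a cut set of $\psi$ if $\psi(x)=0$ whenever $x_j=0$ for all $j\in A$, and minimal if it contains no other cut set. If $\mathcal{C}_1,\dots,\mathcal{C}_s$ are the minimal cut sets, $\psi(x)=\min_{i}\max_{j\in\mathcal{C}_i}x_j$, and the system lifetime is $T=\min_{i=1,\dots,s}\max_{j\in\mathcal{C}_i}X_j$. $\mathcal{D}_2$ is the set of continuous bivariate distribution functions with support in $[0,1]^2$. *)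

theory Defs
  imports "HOL-Probability.Probability"
begin

text \<open>Components are indexed by {..<n}; a state vector is a function nat => bool
  (True = working), a system is a map (nat => bool) => bool.\<close>

definition semi_coherent :: "nat \<Rightarrow> ((nat \<Rightarrow> bool) \<Rightarrow> bool) \<Rightarrow> bool" where
  "semi_coherent n \<psi> \<longleftrightarrow>
     (\<forall>x y. (\<forall>j<n. x j \<le> y j) \<longrightarrow> \<psi> x \<le> \<psi> y) \<and>
     \<psi> (\<lambda>_. False) = False \<and> \<psi> (\<lambda>_. True) = True"

definition cut_set :: "nat \<Rightarrow> ((nat \<Rightarrow> bool) \<Rightarrow> bool) \<Rightarrow> nat set \<Rightarrow> bool" where
  "cut_set n \<psi> A \<longleftrightarrow> A \<subseteq> {..<n} \<and> (\<forall>x. (\<forall>j\<in>A. \<not> x j) \<longrightarrow> \<not> \<psi> x)"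

definition min_cut_set :: "nat \<Rightarrow> ((nat \<Rightarrow> bool) \<Rightarrow> bool) \<Rightarrow> nat set \<Rightarrow> bool" where
  "min_cut_set n \<psi> A \<longleftrightarrow> cut_set n \<psi> A \<and> (\<forall>B. B \<subset> A \<longrightarrow> \<not> cut_set n \<psi> B)"

definition sys_lifetime :: "nat \<Rightarrow> ((nat \<Rightarrow> bool) \<Rightarrow> bool) \<Rightarrow> (nat \<Rightarrow> real) \<Rightarrow> real" where
  "sys_lifetime n \<psi> x = Min ((\<lambda>A. Max (x ` A)) ` {A. min_cut_set n \<psi> A})"

definition copula :: "nat \<Rightarrow> ((nat \<Rightarrow> real) \<Rightarrow> real) \<Rightarrow> bool" where
  "copula n C \<longleftrightarrow> (\<exists>Q. prob_space Q \<and> sets Q = sets (PiM {..<n} (\<lambda>_. borel :: real measure)) \<and>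
     (\<forall>j<n. \<forall>t\<in>{0..1}. measure Q {v\<in>space Q. v j \<le> t} = t) \<and>
     (\<forall>u. (\<forall>j<n. u j \<in> {0..1}) \<longrightarrow> C u = measure Q {v\<in>space Q. \<forall>j<n. v j \<le> u j}))"

definition has_copula_marginal ::
  "'a measure \<Rightarrow> nat \<Rightarrow> (nat \<Rightarrow> 'a \<Rightarrow> real) \<Rightarrow> ((nat \<Rightarrow> real) \<Rightarrow> real) \<Rightarrow> (real \<Rightarrow> real) \<Rightarrow> bool" where
  "has_copula_marginal M n X C F \<longleftrightarrow>
     (\<forall>j<n. \<forall>t. measure M {\<omega>\<in>space M. X j \<omega> \<le> t} = F t) \<and>
     (\<forall>x. measure M {\<omega>\<in>space M. \<forall>j<n. X j \<omega> \<le> x j} = C (\<lambda>j. F (x j)))"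

definition D2 :: "(real \<Rightarrow> real \<Rightarrow> real) set" where
  "D2 = {D. continuous_on UNIV (\<lambda>z. D (fst z) (snd z)) \<and>
        (\<exists>Q. prob_space Q \<and> sets Q = sets (borel :: (real \<times> real) measure) \<and>
             measure Q ({0..1} \<times> {0..1}) = 1 \<and>
             (\<forall>u v. D u v = measure Q ({..u} \<times> {..v})))}"

end

theory Submission
  imports Defs
begin

text \<open>
  Realise the copula by a random vector W with uniform marginals and take
  D(u, v) = P(T(W) \<le> u, T*(W) \<le> v). Each system lifetime equals one of the component
  lifetimes, so D is Lipschitz, and W lies in the unit cube almost surely, hence D \<in> D2.
  The event {T(X) \<le> x, T*(X) \<le> y} is a Boolean combination of the events {X_j \<le> x},
  {X_j \<le> y} (through the minimal cut sets), and so is {T(W) \<le> F x, T*(W) \<le> F y} with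
  the events {W_j \<le> F x}, {W_j \<le> F y}. By inclusion-exclusion it suffices that corresponding
  intersections have equal probabilities. The copula gives this for intersections involving
  every component; the remaining components are given a large threshold L, which changes
  both probabilities by at most n (1 - F L) \<longrightarrow> 0.
\<close>

section \<open>Boolean combinations of events\<close>

lemma sets_Collect_atom:
  assumes "finite S" "finite T" "\<And>i. i \<in> S \<union> T \<Longrightarrow> {\<omega>\<in>space M. P i \<omega>} \<in> sets M"
  shows "{\<omega>\<in>space M. (\<forall>i\<in>S. P i \<omega>) \<and> (\<forall>i\<in>T. \<not> P i \<omega>)} \<in> sets M"
  using assms by (intro sets.sets_Collect_conj sets.sets_Collect_finite_All sets.sets_Collect_neg) auto

lemma (in finite_measure) measure_atom_insert_negative:
  assumes "finite S" "finite T" "\<And>i. i \<in> insert t (S \<union> T) \<Longrightarrow> {\<omega>\<in>space M. P i \<omega>} \<in> sets M"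
  shows "measure M {\<omega>\<in>space M. (\<forall>i\<in>S. P i \<omega>) \<and> (\<forall>i\<in>insert t T. \<not> P i \<omega>)}
       = measure M {\<omega>\<in>space M. (\<forall>i\<in>S. P i \<omega>) \<and> (\<forall>i\<in>T. \<not> P i \<omega>)}
         - measure M {\<omega>\<in>space M. (\<forall>i\<in>insert t S. P i \<omega>) \<and> (\<forall>i\<in>T. \<not> P i \<omega>)}"
proof -
  have "{\<omega>\<in>space M. (\<forall>i\<in>S. P i \<omega>) \<and> (\<forall>i\<in>insert t T. \<not> P i \<omega>)}
      = {\<omega>\<in>space M. (\<forall>i\<in>S. P i \<omega>) \<and> (\<forall>i\<in>T. \<not> P i \<omega>)}
        - {\<omega>\<in>space M. (\<forall>i\<in>insert t S. P i \<omega>) \<and> (\<forall>i\<in>T. \<not> P i \<omega>)}"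
    by auto
  then show ?thesis
    using assms by (simp only:) (intro finite_measure_Diff sets_Collect_atom; auto)
qed

lemma measure_atom_eq:
  assumes M: "finite_measure M" and N: "finite_measure N" and fin: "finite I"
    and PM: "\<And>i. i \<in> I \<Longrightarrow> {\<omega>\<in>space M. P i \<omega>} \<in> sets M"
    and RN: "\<And>i. i \<in> I \<Longrightarrow> {\<omega>\<in>space N. R i \<omega>} \<in> sets N"
    and inter: "\<And>S. S \<subseteq> I \<Longrightarrow>
      measure M {\<omega>\<in>space M. \<forall>i\<in>S. P i \<omega>} = measure N {\<omega>\<in>space N. \<forall>i\<in>S. R i \<omega>}"
    and "S \<subseteq> I" "T \<subseteq> I"
  shows "measure M {\<omega>\<in>space M. (\<forall>i\<in>S. P i \<omega>) \<and> (\<forall>i\<in>T. \<not> P i \<omega>)}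
       = measure N {\<omega>\<in>space N. (\<forall>i\<in>S. R i \<omega>) \<and> (\<forall>i\<in>T. \<not> R i \<omega>)}"
  using \<open>T \<subseteq> I\<close> \<open>S \<subseteq> I\<close>
proof (induction T arbitrary: S rule: infinite_finite_induct)
  case (infinite T)
  then show ?case using fin finite_subset by blast
next
  case empty
  then show ?case using inter by simp
next
  case (insert t T)
  have "finite S" using insert.prems fin finite_subset by auto
  have sub: "S \<subseteq> I" "insert t S \<subseteq> I" "T \<subseteq> I" "insert t (S \<union> T) \<subseteq> I"
    using insert.prems by auto
  show ?case
    using insert.IH[OF sub(3,1)] insert.IH[OF sub(3,2)]
      finite_measure.measure_atom_insert_negative[OF M \<open>finite S\<close> \<open>finite T\<close>, of t P]
      finite_measure.measure_atom_insert_negative[OF N \<open>finite S\<close> \<open>finite T\<close>, of t R]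
      PM[OF subsetD[OF sub(4)]] RN[OF subsetD[OF sub(4)]]
    by presburger
qed

lemma (in finite_measure) measure_pattern_eq_sum_atoms:
  assumes "finite I" "\<And>i. i \<in> I \<Longrightarrow> {\<omega>\<in>space M. P i \<omega>} \<in> sets M"
  shows "measure M {\<omega>\<in>space M. {i\<in>I. P i \<omega>} \<in> W}
       = (\<Sum>K\<in>W \<inter> Pow I. measure M {\<omega>\<in>space M. (\<forall>i\<in>K. P i \<omega>) \<and> (\<forall>i\<in>I - K. \<not> P i \<omega>)})"
proof -
  define atom where "atom K = {\<omega>\<in>space M. (\<forall>i\<in>K. P i \<omega>) \<and> (\<forall>i\<in>I - K. \<not> P i \<omega>)}" for K
  have "measure M {\<omega>\<in>space M. {i\<in>I. P i \<omega>} \<in> W} = measure M (\<Union>K\<in>W \<inter> Pow I. atom K)"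
  proof (intro arg_cong[where f="measure M"] set_eqI iffI)
    fix \<omega> assume "\<omega> \<in> (\<Union>K\<in>W \<inter> Pow I. atom K)"
    then obtain K where "K \<in> W" "K \<subseteq> I" "\<omega> \<in> atom K" by auto
    moreover from this have "{i\<in>I. P i \<omega>} = K" unfolding atom_def by auto
    ultimately show "\<omega> \<in> {\<omega>\<in>space M. {i\<in>I. P i \<omega>} \<in> W}" unfolding atom_def by auto
  next
    fix \<omega> assume "\<omega> \<in> {\<omega>\<in>space M. {i\<in>I. P i \<omega>} \<in> W}"
    then show "\<omega> \<in> (\<Union>K\<in>W \<inter> Pow I. atom K)"
      unfolding atom_def by (auto intro!: bexI[of _ "{i\<in>I. P i \<omega>}"])
  qed
  also have "\<dots> = (\<Sum>K\<in>W \<inter> Pow I. measure M (atom K))"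
  proof (rule finite_measure_finite_Union)
    show "disjoint_family_on atom (W \<inter> Pow I)"
      unfolding disjoint_family_on_def atom_def by auto
    show "atom ` (W \<inter> Pow I) \<subseteq> sets M"
      unfolding atom_def using assms finite_subset by (auto intro!: sets_Collect_atom)
  qed (use assms(1) in simp)
  finally show ?thesis unfolding atom_def .
qed

lemma measure_pattern_eq:
  assumes M: "finite_measure M" and N: "finite_measure N" and fin: "finite I"
    and PM: "\<And>i. i \<in> I \<Longrightarrow> {\<omega>\<in>space M. P i \<omega>} \<in> sets M"
    and RN: "\<And>i. i \<in> I \<Longrightarrow> {\<omega>\<in>space N. R i \<omega>} \<in> sets N"
    and inter: "\<And>S. S \<subseteq> I \<Longrightarrow>
      measure M {\<omega>\<in>space M. \<forall>i\<in>S. P i \<omega>} = measure N {\<omega>\<in>space N. \<forall>i\<in>S. R i \<omega>}"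
  shows "measure M {\<omega>\<in>space M. {i\<in>I. P i \<omega>} \<in> W} = measure N {\<omega>\<in>space N. {i\<in>I. R i \<omega>} \<in> W}"
proof -
  have "measure M {\<omega>\<in>space M. {i\<in>I. P i \<omega>} \<in> W}
      = (\<Sum>K\<in>W \<inter> Pow I. measure M {\<omega>\<in>space M. (\<forall>i\<in>K. P i \<omega>) \<and> (\<forall>i\<in>I - K. \<not> P i \<omega>)})"
    by (rule finite_measure.measure_pattern_eq_sum_atoms[OF M fin PM])
  also have "\<dots> = (\<Sum>K\<in>W \<inter> Pow I. measure N {\<omega>\<in>space N. (\<forall>i\<in>K. R i \<omega>) \<and> (\<forall>i\<in>I - K. \<not> R i \<omega>)})"
    by (intro sum.cong refl measure_atom_eq[OF M N fin PM RN inter]) auto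
  also have "\<dots> = measure N {\<omega>\<in>space N. {i\<in>I. R i \<omega>} \<in> W}"
    by (rule finite_measure.measure_pattern_eq_sum_atoms[OF N fin RN, symmetric])
  finally show ?thesis .
qed

section \<open>Minimal cut sets and system lifetimes\<close>

lemma semi_coherentD:
  assumes "semi_coherent n \<psi>"
  shows "(\<And>j. j < n \<Longrightarrow> x j \<le> y j) \<Longrightarrow> \<psi> x \<le> \<psi> y" and "\<not> \<psi> (\<lambda>_. False)" and "\<psi> (\<lambda>_. True)"
  using assms unfolding semi_coherent_def by blast+

lemma cut_set_lessThan:
  assumes "semi_coherent n \<psi>"
  shows "cut_set n \<psi> {..<n}"
  unfolding cut_set_def
  using semi_coherentD(1)[OF assms, of _ "\<lambda>_. False"] semi_coherentD(2)[OF assms] by auto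

lemma not_cut_set_empty:
  assumes "semi_coherent n \<psi>"
  shows "\<not> cut_set n \<psi> {}"
  using semi_coherentD(3)[OF assms] unfolding cut_set_def by blast

lemma min_cut_set_subset: "min_cut_set n \<psi> A \<Longrightarrow> A \<subseteq> {..<n}"
  unfolding min_cut_set_def cut_set_def by (elim conjE)

lemma finite_min_cut_sets: "finite {A. min_cut_set n \<psi> A}"
  by (rule finite_subset[of _ "Pow {..<n}"]) (auto dest: min_cut_set_subset)

lemma finite_min_cut_set: "min_cut_set n \<psi> A \<Longrightarrow> finite A"
  using finite_subset[OF min_cut_set_subset finite_lessThan] .

lemma min_cut_set_nonempty:
  assumes "semi_coherent n \<psi>" "min_cut_set n \<psi> A"
  shows "A \<noteq> {}"
proof
  assume "A = {}"
  with assms(2) have "cut_set n \<psi> {}" unfolding min_cut_set_def by simp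
  with not_cut_set_empty[OF assms(1)] show False ..
qed

lemma ex_min_cut_set:
  assumes "semi_coherent n \<psi>"
  obtains A where "min_cut_set n \<psi> A"
proof -
  obtain A where A: "cut_set n \<psi> A" "\<And>B. cut_set n \<psi> B \<Longrightarrow> card A \<le> card B"
    using ex_has_least_nat[of "cut_set n \<psi>" "{..<n}" card] cut_set_lessThan[OF assms] by blast
  have "A \<subseteq> {..<n}" using A(1) unfolding cut_set_def by simp
  then have "finite A" by (rule finite_subset) simp
  have "\<not> cut_set n \<psi> B" if "B \<subset> A" for B
    using psubset_card_mono[OF \<open>finite A\<close> that] A(2)[of B] by linarith
  then show thesis
    using that A(1) unfolding min_cut_set_def by blast
qed

lemma sys_lifetime_le_iff:
  assumes "semi_coherent n \<psi>"
  shows "sys_lifetime n \<psi> w \<le> u \<longleftrightarrow> (\<exists>A. min_cut_set n \<psi> A \<and> (\<forall>j\<in>A. w j \<le> u))"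
proof -
  have Max_le: "Max (w ` A) \<le> u \<longleftrightarrow> (\<forall>j\<in>A. w j \<le> u)" if "min_cut_set n \<psi> A" for A
    using finite_min_cut_set[OF that] min_cut_set_nonempty[OF assms that] by (subst Max_le_iff) auto
  obtain A where "min_cut_set n \<psi> A" using ex_min_cut_set[OF assms] .
  then show ?thesis
    unfolding sys_lifetime_def using finite_min_cut_sets Max_le by (subst Min_le_iff) auto
qed

lemma sys_lifetime_in_components:
  assumes "semi_coherent n \<psi>"
  obtains j where "j < n" "sys_lifetime n \<psi> w = w j"
proof -
  obtain A0 where "min_cut_set n \<psi> A0" using ex_min_cut_set[OF assms] .
  then have "sys_lifetime n \<psi> w \<in> (\<lambda>A. Max (w ` A)) ` {A. min_cut_set n \<psi> A}"
    unfolding sys_lifetime_def using finite_min_cut_sets by (intro Min_in) auto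
  then obtain A where A: "min_cut_set n \<psi> A" "sys_lifetime n \<psi> w = Max (w ` A)" by auto
  have "Max (w ` A) \<in> w ` A"
    using finite_min_cut_set[OF A(1)] min_cut_set_nonempty[OF assms A(1)] by (intro Max_in) auto
  then show thesis using A min_cut_set_subset[OF A(1)] that by auto
qed

definition joint_cut_patterns ::
  "nat \<Rightarrow> ((nat \<Rightarrow> bool) \<Rightarrow> bool) \<Rightarrow> ((nat \<Rightarrow> bool) \<Rightarrow> bool) \<Rightarrow> (nat \<times> bool) set set" where
  "joint_cut_patterns n \<psi> \<psi>' =
     {K. (\<exists>A. min_cut_set n \<psi> A \<and> A \<times> {True} \<subseteq> K) \<and> (\<exists>A. min_cut_set n \<psi>' A \<and> A \<times> {False} \<subseteq> K)}"

lemma sys_lifetimes_le_iff_pattern: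
  assumes "semi_coherent n \<psi>" "semi_coherent n \<psi>'"
  shows "sys_lifetime n \<psi> w \<le> z True \<and> sys_lifetime n \<psi>' w \<le> z False
     \<longleftrightarrow> {i \<in> {..<n} \<times> UNIV. w (fst i) \<le> z (snd i)} \<in> joint_cut_patterns n \<psi> \<psi>'"
proof -
  have pattern: "A \<times> {b} \<subseteq> {i \<in> {..<n} \<times> UNIV. w (fst i) \<le> z (snd i)} \<longleftrightarrow> (\<forall>j\<in>A. w j \<le> z b)"
    if "A \<subseteq> {..<n}" for A b
    using that by auto
  have "(\<exists>A. min_cut_set n \<phi> A \<and> (\<forall>j\<in>A. w j \<le> z b))
      \<longleftrightarrow> (\<exists>A. min_cut_set n \<phi> A \<and> A \<times> {b} \<subseteq> {i \<in> {..<n} \<times> UNIV. w (fst i) \<le> z (snd i)})" for \<phi> b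
    using pattern min_cut_set_subset by meson
  then show ?thesis
    unfolding joint_cut_patterns_def sys_lifetime_le_iff[OF assms(1)] sys_lifetime_le_iff[OF assms(2)]
    by simp
qed

lemma sys_lifetime_measurable:
  assumes "semi_coherent n \<psi>" and "\<And>j. j < n \<Longrightarrow> (\<lambda>w. w j) \<in> borel_measurable M"
  shows "sys_lifetime n \<psi> \<in> borel_measurable M"
  unfolding borel_measurable_iff_le sys_lifetime_le_iff[OF assms(1)]
proof
  fix a
  have "{w \<in> space M. \<exists>A\<in>{A. min_cut_set n \<psi> A}. \<forall>j\<in>A. w j \<le> a} \<in> sets M"
  proof (intro sets.sets_Collect_finite_Ex sets.sets_Collect_finite_All finite_min_cut_sets)
    fix A j assume "A \<in> {A. min_cut_set n \<psi> A}" "j \<in> A"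
    then have "j < n" using min_cut_set_subset by blast
    then show "{w \<in> space M. w j \<le> a} \<in> sets M"
      using assms(2) unfolding borel_measurable_iff_le by simp
  qed (auto intro: finite_min_cut_set)
  then show "{w \<in> space M. \<exists>A. min_cut_set n \<psi> A \<and> (\<forall>j\<in>A. w j \<le> a)} \<in> sets M" by simp
qed

section \<open>Random vectors with uniform marginals\<close>

locale uniform_marginals = prob_space Q for Q :: "(nat \<Rightarrow> real) measure" +
  fixes n :: nat
  assumes coordinate_measurable: "j < n \<Longrightarrow> (\<lambda>w. w j) \<in> borel_measurable Q"
    and prob_coordinate_le_unit: "j < n \<Longrightarrow> t \<in> {0..1} \<Longrightarrow> prob {w\<in>space Q. w j \<le> t} = t"
begin

lemma sets_coordinate_le: "j < n \<Longrightarrow> {w\<in>space Q. w j \<le> c} \<in> events"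
  using coordinate_measurable unfolding borel_measurable_iff_le by simp

lemma prob_coordinate_le:
  assumes "j < n"
  shows "prob {w\<in>space Q. w j \<le> t} = max 0 (min 1 t)"
proof -
  have mono: "prob {w\<in>space Q. w j \<le> s} \<le> prob {w\<in>space Q. w j \<le> t}" if "s \<le> t" for s t
    using that sets_coordinate_le[OF assms] by (intro finite_measure_mono) auto
  consider "t < 0" | "t \<in> {0..1}" | "1 < t" by fastforce
  then show ?thesis
  proof cases
    case 1
    then show ?thesis
      using mono[of t 0] prob_coordinate_le_unit[OF assms, of 0]
        measure_nonneg[of Q "{w\<in>space Q. w j \<le> t}"] by simp
  next
    case 2
    then show ?thesis using prob_coordinate_le_unit[OF assms] by simp
  next
    case 3
    then show ?thesis
      using mono[of 1 t] prob_coordinate_le_unit[OF assms, of 1] prob_le_1 by (simp add: antisym)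
  qed
qed

lemma prob_coordinate_between:
  assumes "j < n" "a \<le> b"
  shows "prob {w\<in>space Q. a < w j \<and> w j \<le> b} = max 0 (min 1 b) - max 0 (min 1 a)"
proof -
  have "{w\<in>space Q. a < w j \<and> w j \<le> b} = {w\<in>space Q. w j \<le> b} - {w\<in>space Q. w j \<le> a}"
    by auto
  then show ?thesis
    using assms sets_coordinate_le[OF assms(1)]
    by (simp add: finite_measure_Diff subset_iff prob_coordinate_le)
qed

lemma prob_some_coordinate_between:
  assumes "a \<le> b"
  shows "prob {w\<in>space Q. \<exists>j<n. a < w j \<and> w j \<le> b} \<le> real n * (b - a)"
proof -
  have events: "{w\<in>space Q. a < w j \<and> w j \<le> b} \<in> events" if "j < n" for j
    using coordinate_measurable[OF that] by measurable
  have "{w\<in>space Q. \<exists>j<n. a < w j \<and> w j \<le> b} = (\<Union>j<n. {w\<in>space Q. a < w j \<and> w j \<le> b})"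
    by auto
  also have "prob \<dots> \<le> (\<Sum>j<n. prob {w\<in>space Q. a < w j \<and> w j \<le> b})"
    using events by (intro finite_measure_subadditive_finite) auto
  also have "\<dots> \<le> (\<Sum>j<n. b - a)"
    using assms by (intro sum_mono) (simp add: prob_coordinate_between)
  finally show ?thesis by simp
qed

lemma sys_lifetime_borel_measurable:
  "semi_coherent n \<psi> \<Longrightarrow> sys_lifetime n \<psi> \<in> borel_measurable Q"
  by (erule sys_lifetime_measurable) (rule coordinate_measurable)

lemma sets_sys_lifetime_le:
  "semi_coherent n \<psi> \<Longrightarrow> {w\<in>space Q. sys_lifetime n \<psi> w \<le> c} \<in> events"
  using sys_lifetime_borel_measurable unfolding borel_measurable_iff_le by simp

lemma prob_sys_lifetime_le_shift:
  assumes "semi_coherent n \<psi>" "E \<in> events"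
  shows "prob {w\<in>E. sys_lifetime n \<psi> w \<le> u} \<le> prob {w\<in>E. sys_lifetime n \<psi> w \<le> u'} + real n * \<bar>u - u'\<bar>"
proof -
  let ?T = "sys_lifetime n \<psi>"
  let ?between = "{w\<in>space Q. \<exists>j<n. min u u' < w j \<and> w j \<le> max u u'}"
  have T_events: "{w\<in>E. ?T w \<le> c} \<in> events" for c
  proof -
    have "{w\<in>E. ?T w \<le> c} = E \<inter> {w\<in>space Q. ?T w \<le> c}"
      using sets.sets_into_space[OF assms(2)] by auto
    then show ?thesis using assms sets_sys_lifetime_le by simp
  qed
  have between_events: "?between \<in> events"
    using coordinate_measurable by measurable
  \<comment> \<open>the lifetime is one of the components, so it separates u and u' only if some component does\<close>
  have "{w\<in>E. ?T w \<le> u} \<subseteq> {w\<in>E. ?T w \<le> u'} \<union> ?between"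
  proof
    fix w assume w: "w \<in> {w\<in>E. ?T w \<le> u}"
    obtain j where "j < n" "?T w = w j" using sys_lifetime_in_components[OF assms(1)] .
    then show "w \<in> {w\<in>E. ?T w \<le> u'} \<union> ?between"
      using w sets.sets_into_space[OF assms(2)] by auto
  qed
  then have "prob {w\<in>E. ?T w \<le> u} \<le> prob ({w\<in>E. ?T w \<le> u'} \<union> ?between)"
    by (rule finite_measure_mono) (intro sets.Un T_events between_events)
  also have "\<dots> \<le> prob {w\<in>E. ?T w \<le> u'} + prob ?between"
    using T_events between_events by (rule measure_Un_le)
  also have "prob ?between \<le> real n * (max u u' - min u u')"
    by (rule prob_some_coordinate_between) simp
  also have "max u u' - min u u' = \<bar>u - u'\<bar>" by auto
  finally show ?thesis by simp
qed

definition joint_lifetime_cdf ::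
  "((nat \<Rightarrow> bool) \<Rightarrow> bool) \<Rightarrow> ((nat \<Rightarrow> bool) \<Rightarrow> bool) \<Rightarrow> real \<Rightarrow> real \<Rightarrow> real" where
  "joint_lifetime_cdf \<psi> \<psi>' u v = prob {w\<in>space Q. sys_lifetime n \<psi> w \<le> u \<and> sys_lifetime n \<psi>' w \<le> v}"

lemma joint_lifetime_cdf_diff_le:
  assumes "semi_coherent n \<psi>" "semi_coherent n \<psi>'"
  shows "joint_lifetime_cdf \<psi> \<psi>' u v \<le> joint_lifetime_cdf \<psi> \<psi>' u' v' + real n * \<bar>u - u'\<bar> + real n * \<bar>v - v'\<bar>"
proof -
  let ?T = "sys_lifetime n \<psi>" and ?T' = "sys_lifetime n \<psi>'"
  note events = sets_sys_lifetime_le[OF assms(1)] sets_sys_lifetime_le[OF assms(2)]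
  have "joint_lifetime_cdf \<psi> \<psi>' u v = prob {w\<in>{w\<in>space Q. ?T' w \<le> v}. ?T w \<le> u}"
    unfolding joint_lifetime_cdf_def by (rule arg_cong[where f=prob]) auto
  also have "\<dots> \<le> prob {w\<in>{w\<in>space Q. ?T' w \<le> v}. ?T w \<le> u'} + real n * \<bar>u - u'\<bar>"
    using events by (intro prob_sys_lifetime_le_shift assms)
  also have "prob {w\<in>{w\<in>space Q. ?T' w \<le> v}. ?T w \<le> u'} = prob {w\<in>{w\<in>space Q. ?T w \<le> u'}. ?T' w \<le> v}"
    by (rule arg_cong[where f=prob]) auto
  also have "\<dots> \<le> prob {w\<in>{w\<in>space Q. ?T w \<le> u'}. ?T' w \<le> v'} + real n * \<bar>v - v'\<bar>"
    using events by (intro prob_sys_lifetime_le_shift assms)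
  also have "prob {w\<in>{w\<in>space Q. ?T w \<le> u'}. ?T' w \<le> v'} = joint_lifetime_cdf \<psi> \<psi>' u' v'"
    unfolding joint_lifetime_cdf_def by (rule arg_cong[where f=prob]) auto
  finally show ?thesis by simp
qed

lemma continuous_joint_lifetime_cdf:
  assumes "semi_coherent n \<psi>" "semi_coherent n \<psi>'"
  shows "continuous_on UNIV (\<lambda>z. joint_lifetime_cdf \<psi> \<psi>' (fst z) (snd z))"
proof (rule lipschitz_on_continuous_on)
  show "(2 * real n)-lipschitz_on UNIV (\<lambda>z. joint_lifetime_cdf \<psi> \<psi>' (fst z) (snd z))"
  proof (rule lipschitz_onI)
    fix z z' :: "real \<times> real"
    have "\<bar>fst z - fst z'\<bar> \<le> dist z z'" "\<bar>snd z - snd z'\<bar> \<le> dist z z'"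
      using dist_fst_le[of z z'] dist_snd_le[of z z'] by (simp_all add: dist_real_def)
    then have "real n * (\<bar>fst z - fst z'\<bar> + \<bar>snd z - snd z'\<bar>) \<le> real n * (2 * dist z z')"
      by (intro mult_left_mono) auto
    then show "dist (joint_lifetime_cdf \<psi> \<psi>' (fst z) (snd z)) (joint_lifetime_cdf \<psi> \<psi>' (fst z') (snd z'))
        \<le> 2 * real n * dist z z'"
      using joint_lifetime_cdf_diff_le[OF assms, of "fst z" "snd z" "fst z'" "snd z'"]
        joint_lifetime_cdf_diff_le[OF assms, of "fst z'" "snd z'" "fst z" "snd z"]
      by (simp add: dist_real_def abs_minus_commute algebra_simps)
  qed simp
qed

lemma AE_coordinates_unit: "AE w in Q. \<forall>j<n. 0 < w j \<and> w j \<le> 1"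
proof -
  have "AE w in Q. 0 < w j \<and> w j \<le> 1" if "j < n" for j
  proof -
    have "{w\<in>space Q. 0 < w j \<and> w j \<le> 1} \<in> events"
      using coordinate_measurable[OF that] by measurable
    moreover have "prob {w\<in>space Q. 0 < w j \<and> w j \<le> 1} = 1"
      using prob_coordinate_between[OF that, of 0 1] by simp
    ultimately show ?thesis by (simp add: prob_Collect_eq_1)
  qed
  then have "AE w in Q. \<forall>j\<in>{..<n}. 0 < w j \<and> w j \<le> 1"
    by (intro AE_finite_allI) auto
  then show ?thesis by eventually_elim auto
qed

lemma joint_lifetime_cdf_in_D2:
  assumes "semi_coherent n \<psi>" "semi_coherent n \<psi>'"
  shows "joint_lifetime_cdf \<psi> \<psi>' \<in> D2"
proof -
  let ?T = "sys_lifetime n \<psi>" and ?T' = "sys_lifetime n \<psi>'"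
  define R where "R = distr Q borel (\<lambda>w. (?T w, ?T' w))"
  have meas: "(\<lambda>w. (?T w, ?T' w)) \<in> borel_measurable Q"
    using measurable_Pair[OF sys_lifetime_borel_measurable[OF assms(1)] sys_lifetime_borel_measurable[OF assms(2)]]
    by (simp add: borel_prod)
  have measure_R: "measure R A = prob {w\<in>space Q. (?T w, ?T' w) \<in> A}" if "A \<in> sets borel" for A
    unfolding R_def using meas that by (subst measure_distr) (auto intro!: arg_cong[where f=prob])
  have "AE w in Q. (?T w, ?T' w) \<in> {0..1} \<times> {0..1}"
    using AE_coordinates_unit
  proof eventually_elim
    case (elim w)
    obtain j j' where "j < n" "?T w = w j" "j' < n" "?T' w = w j'"
      using sys_lifetime_in_components[OF assms(1)] sys_lifetime_in_components[OF assms(2)] by metis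
    with elim show ?case by (auto simp: less_imp_le)
  qed
  moreover have "{w\<in>space Q. (?T w, ?T' w) \<in> {0..1} \<times> {0..1}} \<in> events"
    using measurable_sets[OF meas borel_closed[OF closed_Times[OF closed_atLeastAtMost closed_atLeastAtMost]]]
    by (simp add: vimage_def Int_def conj_commute)
  ultimately have "prob {w\<in>space Q. (?T w, ?T' w) \<in> {0..1} \<times> {0..1}} = 1"
    by (subst prob_Collect_eq_1)
  then have "measure R ({0..1} \<times> {0..1}) = 1"
    by (subst measure_R) (auto intro: borel_closed closed_Times)
  moreover have "joint_lifetime_cdf \<psi> \<psi>' u v = measure R ({..u} \<times> {..v})" for u v
    unfolding joint_lifetime_cdf_def by (subst measure_R) (auto intro: borel_closed closed_Times)
  moreover have "prob_space R"
    unfolding R_def using meas by (rule prob_space_distr)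
  ultimately show ?thesis
    unfolding D2_def using continuous_joint_lifetime_cdf[OF assms] by (auto simp: R_def)
qed

end

section \<open>Components with a given copula\<close>

lemma (in prob_space) cdf_distr:
  "X \<in> borel_measurable M \<Longrightarrow> cdf (distr M borel X) t = prob {\<omega>\<in>space M. X \<omega> \<le> t}"
  unfolding cdf_def by (subst measure_distr) (auto intro!: arg_cong[where f=prob])

lemma (in prob_space) prob_restrict_finite_All_ge:
  assumes "A \<in> events" "finite K" "\<And>j. j \<in> K \<Longrightarrow> {\<omega>\<in>space M. R j \<omega>} \<in> events"
  shows "prob A - (\<Sum>j\<in>K. 1 - prob {\<omega>\<in>space M. R j \<omega>}) \<le> prob {\<omega>\<in>A. \<forall>j\<in>K. R j \<omega>}"
proof -
  let ?fail = "\<Union>j\<in>K. space M - {\<omega>\<in>space M. R j \<omega>}"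
  have fail_events: "?fail \<in> events"
    using assms(2,3) by (intro sets.finite_UN sets.compl_sets) auto
  have "{\<omega>\<in>A. \<forall>j\<in>K. R j \<omega>} = A \<inter> {\<omega>\<in>space M. \<forall>j\<in>K. R j \<omega>}"
    using sets.sets_into_space[OF assms(1)] by auto
  then have restrict_events: "{\<omega>\<in>A. \<forall>j\<in>K. R j \<omega>} \<in> events"
    using assms by (simp add: sets.Int sets.sets_Collect_finite_All)
  note events = restrict_events fail_events
  have "A \<subseteq> {\<omega>\<in>A. \<forall>j\<in>K. R j \<omega>} \<union> ?fail"
    using sets.sets_into_space[OF assms(1)] by auto
  then have "prob A \<le> prob ({\<omega>\<in>A. \<forall>j\<in>K. R j \<omega>} \<union> ?fail)"
    by (rule finite_measure_mono) (intro sets.Un events)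
  also have "\<dots> \<le> prob {\<omega>\<in>A. \<forall>j\<in>K. R j \<omega>} + prob ?fail"
    using events by (rule measure_Un_le)
  also have "prob ?fail \<le> (\<Sum>j\<in>K. prob (space M - {\<omega>\<in>space M. R j \<omega>}))"
    using assms(2,3) by (intro finite_measure_subadditive_finite) auto
  also have "\<dots> = (\<Sum>j\<in>K. 1 - prob {\<omega>\<in>space M. R j \<omega>})"
    using assms(3) by (intro sum.cong refl prob_compl)
  finally show ?thesis by simp
qed

lemma copula_uniform_marginals:
  assumes "copula n C"
  obtains Q where "uniform_marginals Q n"
    and "\<And>u. (\<forall>j<n. u j \<in> {0..1}) \<Longrightarrow> C u = measure Q {w\<in>space Q. \<forall>j<n. w j \<le> u j}"
proof -
  obtain Q where Q: "prob_space Q" "sets Q = sets (PiM {..<n} (\<lambda>_. borel :: real measure))"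
    and uniform: "\<forall>j<n. \<forall>t\<in>{0..1}. measure Q {v\<in>space Q. v j \<le> t} = t"
    and C: "\<forall>u. (\<forall>j<n. u j \<in> {0..1}) \<longrightarrow> C u = measure Q {v\<in>space Q. \<forall>j<n. v j \<le> u j}"
    using assms unfolding copula_def by blast
  have "(\<lambda>w. w j) \<in> borel_measurable Q" if "j < n" for j
    using that by (subst measurable_cong_sets[OF Q(2) refl]) (intro measurable_component_singleton; simp)
  then have "uniform_marginals Q n"
    using Q(1) uniform by (simp add: uniform_marginals_def uniform_marginals_axioms_def)
  with C show thesis using that by blast
qed

locale copula_components = uniform_marginals Q n + M: prob_space M
  for Q :: "(nat \<Rightarrow> real) measure" and n :: nat and M :: "'a measure"
    and X :: "nat \<Rightarrow> 'a \<Rightarrow> real" and C :: "(nat \<Rightarrow> real) \<Rightarrow> real" and F :: "real \<Rightarrow> real" +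
  assumes component_measurable: "j < n \<Longrightarrow> X j \<in> borel_measurable M"
    and marginals: "has_copula_marginal M n X C F"
    and copula_eq_prob: "(\<forall>j<n. u j \<in> {0..1}) \<Longrightarrow> C u = prob {w\<in>space Q. \<forall>j<n. w j \<le> u j}"
begin

lemma sets_component_le: "j < n \<Longrightarrow> {\<omega>\<in>space M. X j \<omega> \<le> c} \<in> M.events"
  using component_measurable unfolding borel_measurable_iff_le by simp

lemma prob_component_le: "j < n \<Longrightarrow> M.prob {\<omega>\<in>space M. X j \<omega> \<le> t} = F t"
  using marginals by (simp add: has_copula_marginal_def)

lemma prob_all_components_le: "M.prob {\<omega>\<in>space M. \<forall>j<n. X j \<omega> \<le> x j} = C (\<lambda>j. F (x j))"
  using marginals by (simp add: has_copula_marginal_def)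

lemma marginal_eq_cdf: "j < n \<Longrightarrow> F = cdf (distr M borel (X j))"
  using component_measurable by (intro ext) (simp add: prob_component_le M.cdf_distr)

lemma marginal_properties:
  assumes "0 < n"
  shows "F t \<in> {0..1}" and "mono F" and "(\<lambda>k. F (real k)) \<longlonglongrightarrow> 1"
proof -
  interpret X0: real_distribution "distr M borel (X 0)"
    using component_measurable[OF assms] by simp
  show "F t \<in> {0..1}" "mono F" "(\<lambda>k. F (real k)) \<longlonglongrightarrow> 1"
    unfolding marginal_eq_cdf[OF assms]
    using X0.cdf_nonneg X0.cdf_bounded_prob X0.cdf_nondecreasing X0.cdf_lim_infty_prob
    by (auto simp: mono_def)
qed

lemma prob_components_le_approx:
  assumes J: "J \<subseteq> {..<n}"
  shows "\<bar>M.prob {\<omega>\<in>space M. \<forall>j\<in>J. X j \<omega> \<le> t j} - prob {w\<in>space Q. \<forall>j\<in>J. w j \<le> F (t j)}\<bar>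
    \<le> real (card ({..<n} - J)) * (1 - F L)"
proof (cases "n = 0")
  case True
  with J show ?thesis using prob_space M.prob_space by simp
next
  case False
  have F_unit: "F s \<in> {0..1}" for s
    using False by (intro marginal_properties(1)) simp
  define K where "K = {..<n} - J"
  define tL where "tL j = (if j \<in> J then t j else L)" for j
  define EM where "EM = {\<omega>\<in>space M. \<forall>j\<in>J. X j \<omega> \<le> t j}"
  define EQ where "EQ = {w\<in>space Q. \<forall>j\<in>J. w j \<le> F (t j)}"
  have "finite K" "finite J" using J finite_subset by (auto simp: K_def)
  have "EM \<in> M.events" "EQ \<in> events"
    unfolding EM_def EQ_def using J \<open>finite J\<close> sets_component_le sets_coordinate_le
    by (auto intro!: sets.sets_Collect_finite_All)
  \<comment> \<open>the copula only determines events with a threshold on every component\<close>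
  have "M.prob {\<omega>\<in>space M. \<forall>j<n. X j \<omega> \<le> tL j} = prob {w\<in>space Q. \<forall>j<n. w j \<le> F (tL j)}"
    using F_unit False by (simp add: prob_all_components_le copula_eq_prob)
  moreover have "{\<omega>\<in>space M. \<forall>j<n. X j \<omega> \<le> tL j} = {\<omega>\<in>EM. \<forall>j\<in>K. X j \<omega> \<le> L}"
    unfolding EM_def K_def tL_def using J by auto
  moreover have "{w\<in>space Q. \<forall>j<n. w j \<le> F (tL j)} = {w\<in>EQ. \<forall>j\<in>K. w j \<le> F L}"
    unfolding EQ_def K_def tL_def using J by auto
  ultimately have full: "M.prob {\<omega>\<in>EM. \<forall>j\<in>K. X j \<omega> \<le> L} = prob {w\<in>EQ. \<forall>j\<in>K. w j \<le> F L}"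
    by simp
  have "M.prob EM - real (card K) * (1 - F L) \<le> M.prob {\<omega>\<in>EM. \<forall>j\<in>K. X j \<omega> \<le> L}"
    using M.prob_restrict_finite_All_ge[OF \<open>EM \<in> M.events\<close> \<open>finite K\<close>, of "\<lambda>j \<omega>. X j \<omega> \<le> L"]
    by (simp add: K_def sets_component_le prob_component_le)
  moreover have "prob EQ - real (card K) * (1 - F L) \<le> prob {w\<in>EQ. \<forall>j\<in>K. w j \<le> F L}"
    using prob_restrict_finite_All_ge[OF \<open>EQ \<in> events\<close> \<open>finite K\<close>, of "\<lambda>j w. w j \<le> F L"] F_unit
    by (simp add: K_def sets_coordinate_le prob_coordinate_le_unit)
  moreover have "M.prob {\<omega>\<in>EM. \<forall>j\<in>K. X j \<omega> \<le> L} \<le> M.prob EM"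
    using \<open>EM \<in> M.events\<close> by (intro M.finite_measure_mono) auto
  moreover have "prob {w\<in>EQ. \<forall>j\<in>K. w j \<le> F L} \<le> prob EQ"
    using \<open>EQ \<in> events\<close> by (intro finite_measure_mono) auto
  ultimately show ?thesis using full unfolding EM_def EQ_def K_def by linarith
qed

lemma prob_components_le_eq:
  assumes J: "J \<subseteq> {..<n}"
  shows "M.prob {\<omega>\<in>space M. \<forall>j\<in>J. X j \<omega> \<le> t j} = prob {w\<in>space Q. \<forall>j\<in>J. w j \<le> F (t j)}"
proof (cases "n = 0")
  case True
  with J show ?thesis using prob_space M.prob_space by simp
next
  case False
  have "(\<lambda>k. real (card ({..<n} - J)) * (1 - F (real k))) \<longlonglongrightarrow> real (card ({..<n} - J)) * (1 - 1)"
    using False by (intro tendsto_intros marginal_properties(3)) simp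
  then have "\<bar>M.prob {\<omega>\<in>space M. \<forall>j\<in>J. X j \<omega> \<le> t j} - prob {w\<in>space Q. \<forall>j\<in>J. w j \<le> F (t j)}\<bar> \<le> 0"
    using prob_components_le_approx[OF J] by (intro LIMSEQ_le_const) auto
  then show ?thesis by simp
qed

lemma prob_component_pairs_le_eq:
  fixes S :: "(nat \<times> 'b) set"
  assumes S: "finite S" "fst ` S \<subseteq> {..<n}"
  shows "M.prob {\<omega>\<in>space M. \<forall>i\<in>S. X (fst i) \<omega> \<le> z (snd i)}
       = prob {w\<in>space Q. \<forall>i\<in>S. w (fst i) \<le> F (z (snd i))}"
proof (cases "S = {}")
  case True
  then show ?thesis using prob_space M.prob_space by simp
next
  case False
  with S have "mono F" by (intro marginal_properties(2)) auto
  \<comment> \<open>several thresholds on one component combine into their minimum, and F commutes with it\<close>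
  define t where "t j = Min (z ` {b. (j, b) \<in> S})" for j
  have "{b. (j, b) \<in> S} \<subseteq> snd ` S" for j by force
  then have finite_thresholds: "finite {b. (j, b) \<in> S}" for j
    using finite_subset finite_imageI[OF S(1)] by blast
  then have thresholds: "finite (z ` {b. (j, b) \<in> S})" "z ` {b. (j, b) \<in> S} \<noteq> {}" if "j \<in> fst ` S" for j
    using that by auto
  have le_min: "c \<le> G (t j) \<longleftrightarrow> (\<forall>b. (j, b) \<in> S \<longrightarrow> c \<le> G (z b))"
    if "mono G" "j \<in> fst ` S" for c :: real and G :: "real \<Rightarrow> real" and j
    using thresholds[OF that(2)] finite_thresholds[of j]
    unfolding t_def mono_Min_commute[OF that(1) thresholds[OF that(2)]] by (simp add: image_image)
  have reduce: "(\<forall>i\<in>S. v (fst i) \<le> G (z (snd i))) \<longleftrightarrow> (\<forall>j\<in>fst ` S. v j \<le> G (t j))" if "mono G"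
    for v :: "nat \<Rightarrow> real" and G :: "real \<Rightarrow> real"
    using le_min[OF that] by force
  have "{\<omega>\<in>space M. \<forall>i\<in>S. X (fst i) \<omega> \<le> z (snd i)} = {\<omega>\<in>space M. \<forall>j\<in>fst ` S. X j \<omega> \<le> t j}"
  proof (rule Collect_cong)
    fix \<omega>
    show "\<omega> \<in> space M \<and> (\<forall>i\<in>S. X (fst i) \<omega> \<le> z (snd i)) \<longleftrightarrow> \<omega> \<in> space M \<and> (\<forall>j\<in>fst ` S. X j \<omega> \<le> t j)"
      using reduce[of id "\<lambda>j. X j \<omega>"] by (simp add: mono_def)
  qed
  moreover have "{w\<in>space Q. \<forall>i\<in>S. w (fst i) \<le> F (z (snd i))} = {w\<in>space Q. \<forall>j\<in>fst ` S. w j \<le> F (t j)}"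
    using reduce[OF \<open>mono F\<close>] by blast
  ultimately show ?thesis
    using prob_components_le_eq[OF S(2)] by simp
qed

lemma prob_joint_lifetimes_eq:
  assumes \<psi>: "semi_coherent n \<psi>" and \<psi>': "semi_coherent n \<psi>'"
  shows "M.prob {\<omega>\<in>space M. sys_lifetime n \<psi> (\<lambda>j. X j \<omega>) \<le> x \<and> sys_lifetime n \<psi>' (\<lambda>j. X j \<omega>) \<le> y}
       = joint_lifetime_cdf \<psi> \<psi>' (F x) (F y)"
proof -
  define z where "z b = (if b then x else y)" for b
  let ?I = "{..<n} \<times> (UNIV :: bool set)"
  have "M.prob {\<omega>\<in>space M. {i\<in>?I. X (fst i) \<omega> \<le> z (snd i)} \<in> joint_cut_patterns n \<psi> \<psi>'}
      = prob {w\<in>space Q. {i\<in>?I. w (fst i) \<le> F (z (snd i))} \<in> joint_cut_patterns n \<psi> \<psi>'}"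
  proof (rule measure_pattern_eq)
    show "{\<omega>\<in>space M. X (fst i) \<omega> \<le> z (snd i)} \<in> M.events" if "i \<in> ?I" for i
      using sets_component_le that by auto
    show "{w\<in>space Q. w (fst i) \<le> F (z (snd i))} \<in> events" if "i \<in> ?I" for i
      using sets_coordinate_le that by auto
    show "M.prob {\<omega>\<in>space M. \<forall>i\<in>S. X (fst i) \<omega> \<le> z (snd i)}
        = prob {w\<in>space Q. \<forall>i\<in>S. w (fst i) \<le> F (z (snd i))}" if "S \<subseteq> ?I" for S
      using that finite_subset[OF that] by (intro prob_component_pairs_le_eq) auto
  qed (simp_all add: finite_measure_axioms M.finite_measure_axioms)
  moreover note sys_lifetimes_le_iff_pattern[OF \<psi> \<psi>', where z=z, unfolded z_def if_True if_False]
    sys_lifetimes_le_iff_pattern[OF \<psi> \<psi>', where z="F \<circ> z", unfolded z_def comp_def if_True if_False]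
  ultimately show ?thesis
    unfolding joint_lifetime_cdf_def z_def by (simp add: if_distrib)
qed

end

theorem mainTheorem14:
  fixes n :: nat and C :: "(nat \<Rightarrow> real) \<Rightarrow> real"
    and \<psi> \<psi>' :: "(nat \<Rightarrow> bool) \<Rightarrow> bool"
  assumes "copula n C" and "semi_coherent n \<psi>" and "semi_coherent n \<psi>'"
  shows "\<exists>D\<in>D2. \<forall>(M :: 'a measure) X F.
           prob_space M \<and> (\<forall>j<n. X j \<in> borel_measurable M) \<and> has_copula_marginal M n X C F
           \<longrightarrow> (\<forall>x y. measure M {\<omega>\<in>space M. sys_lifetime n \<psi> (\<lambda>j. X j \<omega>) \<le> x \<and>
                                              sys_lifetime n \<psi>' (\<lambda>j. X j \<omega>) \<le> y}
                      = D (F x) (F y))"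
proof -
  obtain Q where Q: "uniform_marginals Q n"
    and C: "\<And>u. (\<forall>j<n. u j \<in> {0..1}) \<Longrightarrow> C u = measure Q {w\<in>space Q. \<forall>j<n. w j \<le> u j}"
    using copula_uniform_marginals[OF assms(1)] by blast
  show ?thesis
  proof (intro bexI allI impI)
    show "uniform_marginals.joint_lifetime_cdf Q n \<psi> \<psi>' \<in> D2"
      using uniform_marginals.joint_lifetime_cdf_in_D2[OF Q assms(2,3)] .
    fix M :: "'a measure" and X F x y
    assume "prob_space M \<and> (\<forall>j<n. X j \<in> borel_measurable M) \<and> has_copula_marginal M n X C F"
    then interpret copula_components Q n M X C F
      using Q C by (intro copula_components.intro copula_components_axioms.intro) auto
    show "measure M {\<omega>\<in>space M. sys_lifetime n \<psi> (\<lambda>j. X j \<omega>) \<le> x \<and> sys_lifetime n \<psi>' (\<lambda>j. X j \<omega>) \<le> y}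
        = joint_lifetime_cdf \<psi> \<psi>' (F x) (F y)"
      using prob_joint_lifetimes_eq[OF assms(2,3)] .
  qed
qed

end
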